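(* Let $A\in\mathbb{R}^{n\times n}$ be entrywise nonnegative with all diagonal entries positive (no invertibility assumed). Then $A$ is a Karamardian matrix.
   Context: For $M\in\mathbb{R}^{n\times n}$ let $K_M=\mathbb{R}^n_+\cap R(M)$ and $K_M^*=\{y: x^Ty\ge 0\ \forall x\in K_M\}$ (one has $K_M^*=\mathbb{R}^n_++N(M^T)$, with interior $\{a+b: a>0,\ b\in N(M^T)\}$). For $q$, LCP$(M,K_M,q)$ is to find $x\in K_M$ with $Mx+q\in K_M^*$ and $x^T(Mx+q)=0$. $M$ is a Karamardian matrix if $K_M\ne\{0\}$ and there exists $d$ in the interior of $K_M^*$ such that both LCP$(M,K_M,0)$ and LCP$(M,K_M,d)$ have $x=0$ as their only solution. *)

theory Defs
  imports "HOL-Analysis.Analysis"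
begin

definition nonneg_orthant :: "(real^'n) set" where
  "nonneg_orthant = {x. \<forall>i. x $ i \<ge> 0}"

definition K_cone :: "real^'n^'n \<Rightarrow> (real^'n) set" where
  "K_cone M = nonneg_orthant \<inter> range (\<lambda>x. M *v x)"

definition dual_cone :: "(real^'n) set \<Rightarrow> (real^'n) set" where
  "dual_cone K = {y. \<forall>x\<in>K. x \<bullet> y \<ge> 0}"

definition LCP_sol :: "real^'n^'n \<Rightarrow> (real^'n) set \<Rightarrow> real^'n \<Rightarrow> real^'n \<Rightarrow> bool" where
  "LCP_sol M K q x \<longleftrightarrow> x \<in> K \<and> M *v x + q \<in> dual_cone K \<and> x \<bullet> (M *v x + q) = 0"

definition karamardian :: "real^'n^'n \<Rightarrow> bool" where
  "karamardian M \<longleftrightarrow> K_cone M \<noteq> {0} \<and>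
     (\<exists>d\<in>interior (dual_cone (K_cone M)).
        {x. LCP_sol M (K_cone M) 0 x} = {0} \<and> {x. LCP_sol M (K_cone M) d x} = {0})"

end

theory Submission
  imports Defs
begin

text \<open>Every candidate solution x lies in the nonnegative orthant, where for any q \<ge> 0 each term
  of the complementarity sum satisfies x_i (A x + q)_i \<ge> a_ii x_i^2 \<ge> 0. So every term vanishes,
  and a_ii > 0 forces x = 0. As K_A is contained in the orthant, its dual cone contains the orthant,
  whose interior holds the all-ones vector d; and A d is a nonzero element of K_A.\<close>

lemma inner_nonneg_orthant_eq_0_imp_mult_eq_0:
  fixes x y :: "real^'n"
  assumes "x \<in> nonneg_orthant" "y \<in> nonneg_orthant" "x \<bullet> y = 0"
  shows "x $ i * y $ i = 0"
proof -
  have "(\<Sum>j\<in>UNIV. x $ j * y $ j) = 0"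
    using assms(3) by (simp add: inner_vec_def)
  moreover have "\<forall>j\<in>UNIV. 0 \<le> x $ j * y $ j"
    using assms(1,2) by (simp add: nonneg_orthant_def)
  ultimately show ?thesis
    using sum_nonneg_eq_0_iff[of UNIV "\<lambda>j. x $ j * y $ j"] by simp
qed

lemma diag_mult_le_matrix_vector_mult:
  fixes A :: "real^'n^'n"
  assumes "\<forall>i j. A $ i $ j \<ge> 0" "x \<in> nonneg_orthant"
  shows "A $ i $ i * x $ i \<le> (A *v x) $ i"
proof -
  have "A $ i $ i * x $ i \<le> (\<Sum>j\<in>UNIV. A $ i $ j * x $ j)"
    by (rule member_le_sum) (use assms in \<open>auto simp: nonneg_orthant_def\<close>)
  then show ?thesis
    by (simp add: matrix_vector_mult_def)
qed

lemma matrix_vector_mult_nonneg_orthant: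
  fixes A :: "real^'n^'n"
  assumes "\<forall>i j. A $ i $ j \<ge> 0" "x \<in> nonneg_orthant"
  shows "A *v x \<in> nonneg_orthant"
  using assms by (auto simp: nonneg_orthant_def matrix_vector_mult_def intro: sum_nonneg)

lemma K_cone_subset_nonneg_orthant: "K_cone M \<subseteq> nonneg_orthant"
  by (simp add: K_cone_def)

lemma zero_in_K_cone: "0 \<in> K_cone M"
  by (auto simp: K_cone_def nonneg_orthant_def intro: range_eqI[of _ _ 0])

lemma nonneg_orthant_subset_dual_cone:
  assumes "K \<subseteq> nonneg_orthant"
  shows "nonneg_orthant \<subseteq> dual_cone K"
  using assms by (auto simp: dual_cone_def nonneg_orthant_def inner_vec_def intro!: sum_nonneg)

lemma ones_in_interior_nonneg_orthant: "(\<chi> i. 1) \<in> interior (nonneg_orthant :: (real^'n) set)"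
proof (rule interiorI)
  show "open {x :: real^'n. \<forall>i. 0 < x $ i}"
    unfolding Collect_all_eq by (intro open_INT) (auto simp: open_halfspace_component_gt_cart)
qed (auto simp: nonneg_orthant_def less_imp_le)

lemma LCP_sol_0:
  assumes "0 \<in> K" "q \<in> dual_cone K"
  shows "LCP_sol M K q 0"
  using assms by (simp add: LCP_sol_def)

lemma LCP_sol_nonneg_orthant_eq_0:
  fixes A :: "real^'n^'n"
  assumes nonneg: "\<forall>i j. A $ i $ j \<ge> 0" and diag: "\<forall>i. A $ i $ i > 0"
    and "K \<subseteq> nonneg_orthant" "q \<in> nonneg_orthant" "LCP_sol A K q x"
  shows "x = 0"
proof -
  have x: "x \<in> nonneg_orthant" and compl: "x \<bullet> (A *v x + q) = 0"
    using assms(3,5) by (auto simp: LCP_sol_def)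
  have Axq: "A *v x + q \<in> nonneg_orthant"
    using matrix_vector_mult_nonneg_orthant[OF nonneg x] assms(4)
    by (simp add: nonneg_orthant_def)
  have "x $ i = 0" for i
  proof -
    have "A $ i $ i * x $ i \<le> (A *v x + q) $ i"
      using diag_mult_le_matrix_vector_mult[OF nonneg x, of i] assms(4)
      by (simp add: nonneg_orthant_def add_increasing2)
    then have "x $ i * (A $ i $ i * x $ i) \<le> x $ i * (A *v x + q) $ i"
      using x by (simp add: mult_left_mono nonneg_orthant_def)
    also have "\<dots> = 0"
      using inner_nonneg_orthant_eq_0_imp_mult_eq_0[OF x Axq compl] .
    finally have "A $ i $ i * (x $ i * x $ i) \<le> 0"
      by (simp add: algebra_simps)
    then have "x $ i * x $ i \<le> 0"
      using diag[rule_format, of i] by (simp add: mult_le_0_iff)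
    then show ?thesis
      using mult_le_0_iff[of "x $ i" "x $ i"] by linarith
  qed
  then show ?thesis
    by (simp add: vec_eq_iff)
qed

lemma K_cone_neq_0:
  fixes A :: "real^'n^'n"
  assumes "\<forall>i j. A $ i $ j \<ge> 0" "\<forall>i. A $ i $ i > 0"
  shows "K_cone A \<noteq> {0}"
proof -
  define d :: "real^'n" where "d = (\<chi> i. 1)"
  have d: "d \<in> nonneg_orthant"
    by (simp add: d_def nonneg_orthant_def)
  have "A *v d \<in> K_cone A"
    using matrix_vector_mult_nonneg_orthant[OF assms(1) d] by (simp add: K_cone_def)
  moreover have "A *v d \<noteq> 0"
  proof
    fix i :: 'n
    assume "A *v d = 0"
    then show False
      using diag_mult_le_matrix_vector_mult[OF assms(1) d, of i] assms(2)[rule_format, of i]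
      by (simp add: d_def)
  qed
  ultimately show ?thesis
    by blast
qed

lemma ones_in_interior_dual_K_cone: "(\<chi> i. 1) \<in> interior (dual_cone (K_cone M))"
  using ones_in_interior_nonneg_orthant
    interior_mono[OF nonneg_orthant_subset_dual_cone[OF K_cone_subset_nonneg_orthant]]
  by blast

theorem mainTheorem16:
  fixes A :: "real^'n^'n"
  assumes "\<forall>i j. A $ i $ j \<ge> 0"
    and "\<forall>i. A $ i $ i > 0"
  shows "karamardian A"
proof -
  have "{x. LCP_sol A (K_cone A) q x} = {0}" if "q \<in> nonneg_orthant" for q
    using LCP_sol_nonneg_orthant_eq_0[OF assms K_cone_subset_nonneg_orthant that]
      LCP_sol_0[OF zero_in_K_cone] that
      nonneg_orthant_subset_dual_cone[OF K_cone_subset_nonneg_orthant]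
    by blast
  moreover have "0 \<in> (nonneg_orthant :: (real^'n) set)" "(\<chi> i. 1) \<in> (nonneg_orthant :: (real^'n) set)"
    by (simp_all add: nonneg_orthant_def)
  ultimately show ?thesis
    unfolding karamardian_def using K_cone_neq_0[OF assms] ones_in_interior_dual_K_cone by blast
qed

end
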